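(* Let $\lambda/\mu$ be a border strip with $n$ cells, let $Q_{\lambda/\mu}$ be its border strip poset, and let $\omega$ be a reversed Schur labeling of it. Then $$e_q^{\mathrm{maj}}(Q_{\lambda/\mu},\omega)=\sum_{\mu\to\nu} q^{|Q_{\lambda/\nu_1}|}\, e_q^{\mathrm{maj}}(Q_{\lambda/\nu},\omega_\nu),$$ where the sum is over inner corners $u$ of $\lambda/\mu$ (with $[\nu]=[\mu]\cup\{u\}$), $Q_{\lambda/\nu}$ is the subposet on $[\lambda/\nu]=[\lambda/\mu]\setminus\{u\}$, $\omega_\nu$ is the restriction of $\omega$, and $Q_{\lambda/\nu_1}$ is the set of cells of $[\lambda/\mu]$ with content less than $c(u)$.
   Context: English notation: $[\lambda]=\{(i,j):1\le i\le\ell(\lambda),1\le j\le\lambda_i\}$, $[\lambda/\mu]=[\lambda]\setminus[\mu]$, content $c(i,j)=j-i$. A border strip is a skew shape whose diagram is edge-connected with no $2\times2$ square (its cells have distinct contents). Its poset $Q_{\lambda/\mu}$ on $[\lambda/\mu]$ has $(i,j)\le(i',j')$ iff $i\ge i'$ and $j\ge j'$; inner corners are cells $u\in[\lambda/\mu]$ with $[\mu]\cup\{u\}$ a partition diagram. A reversed Schur labeling is a bijection $\omega:[\lambda/\mu]\to[n]$ whose values strictly decrease as the cells are listed in increasing order of content. For a poset $R$ with injective labeling $\omega_R$ into $\mathbb{Z}$ and $|R|=r$, each order-preserving bijection $g:R\to[r]$ gives the word $\sigma=\omega_R\circ g^{-1}$; $\mathrm{maj}(\sigma)=\sum_{i:\sigma_i>\sigma_{i+1}}i$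 and $e_q^{\mathrm{maj}}(R,\omega_R)=\sum_g q^{\mathrm{maj}(\omega_R\circ g^{-1})}$. *)

theory Defs
  imports Main
begin

type_synonym cell = "nat \<times> nat"

definition is_partition :: "nat list \<Rightarrow> bool" where
  "is_partition lam \<longleftrightarrow> sorted_wrt (\<ge>) lam \<and> (\<forall>x\<in>set lam. 0 < x)"

definition diagram :: "nat list \<Rightarrow> cell set" where
  "diagram lam = {(i, j). 1 \<le> i \<and> i \<le> length lam \<and> 1 \<le> j \<and> j \<le> lam ! (i - 1)}"

definition skew :: "nat list \<Rightarrow> nat list \<Rightarrow> cell set" where
  "skew lam mu = diagram lam - diagram mu"

definition content :: "cell \<Rightarrow> int" where
  "content c = int (snd c) - int (fst c)"

definition adjacent :: "cell \<Rightarrow> cell \<Rightarrow> bool" where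
  "adjacent a b \<longleftrightarrow>
     (fst a = fst b \<and> (snd b = Suc (snd a) \<or> snd a = Suc (snd b))) \<or>
     (snd a = snd b \<and> (fst b = Suc (fst a) \<or> fst a = Suc (fst b)))"

definition edge_connected :: "cell set \<Rightarrow> bool" where
  "edge_connected S \<longleftrightarrow> S \<noteq> {} \<and>
     (\<forall>a\<in>S. \<forall>b\<in>S. (\<lambda>x y. x \<in> S \<and> y \<in> S \<and> adjacent x y)\<^sup>*\<^sup>* a b)"

definition no_2x2 :: "cell set \<Rightarrow> bool" where
  "no_2x2 S \<longleftrightarrow> \<not> (\<exists>i j. (i, j) \<in> S \<and> (Suc i, j) \<in> S \<and> (i, Suc j) \<in> S \<and> (Suc i, Suc j) \<in> S)"

definition border_strip :: "nat list \<Rightarrow> nat list \<Rightarrow> bool" where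
  "border_strip lam mu \<longleftrightarrow> is_partition lam \<and> is_partition mu \<and>
     diagram mu \<subseteq> diagram lam \<and> edge_connected (skew lam mu) \<and> no_2x2 (skew lam mu)"

definition Qle :: "cell \<Rightarrow> cell \<Rightarrow> bool" where
  "Qle a b \<longleftrightarrow> fst a \<ge> fst b \<and> snd a \<ge> snd b"

definition inner_corners :: "nat list \<Rightarrow> nat list \<Rightarrow> cell set" where
  "inner_corners lam mu = {u \<in> skew lam mu. \<exists>nu. is_partition nu \<and> diagram nu = diagram mu \<union> {u}}"

definition reversed_schur_labeling :: "nat list \<Rightarrow> nat list \<Rightarrow> (cell \<Rightarrow> nat) \<Rightarrow> bool" where
  "reversed_schur_labeling lam mu \<omega> \<longleftrightarrow>
     bij_betw \<omega> (skew lam mu) {1..card (skew lam mu)} \<and>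
     (\<forall>u\<in>skew lam mu. \<forall>v\<in>skew lam mu. content u < content v \<longrightarrow> \<omega> v < \<omega> u)"

text \<open>Order-preserving bijections g : R -> [r] (made unique outside R by g x = 0).\<close>
definition lin_exts :: "('b \<Rightarrow> 'b \<Rightarrow> bool) \<Rightarrow> 'b set \<Rightarrow> ('b \<Rightarrow> nat) set" where
  "lin_exts le R = {g. bij_betw g R {1..card R} \<and>
      (\<forall>x\<in>R. \<forall>y\<in>R. le x y \<longrightarrow> g x \<le> g y) \<and> (\<forall>x. x \<notin> R \<longrightarrow> g x = 0)}"

definition maj :: "(nat \<Rightarrow> 'c::linorder) \<Rightarrow> nat \<Rightarrow> nat" where
  "maj \<sigma> r = (\<Sum>i\<in>{i. 1 \<le> i \<and> i < r \<and> \<sigma> (Suc i) < \<sigma> i}. i)"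

definition emaj :: "('b \<Rightarrow> 'b \<Rightarrow> bool) \<Rightarrow> 'b set \<Rightarrow> ('b \<Rightarrow> 'c::linorder) \<Rightarrow> 'a::comm_ring_1 \<Rightarrow> 'a" where
  "emaj le R \<omega> q = (\<Sum>g\<in>lin_exts le R. q ^ maj (\<lambda>k. \<omega> (inv_into R g k)) (card R))"

end

theory Submission
  imports Defs "HOL-Combinatorics.Multiset_Permutations"
begin

(* Read as a word, a linear extension of Q ends in a maximal cell of Q, and the maximal cells of
   a skew shape are its inner corners; so e(Q) splits into sums, one for each inner corner u,
   over the words of Q - u followed by u. In a border strip distinct cells have distinct
   contents, and a cell of content < c(u) is incomparable with one of content > c(u): a
   comparable pair would lie in one row or column, and the cell between them of content c(u)
   would have a cell of Q above or left of it. Hence the words of Q - u are the shuffles of a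
   word of A = {content < c(u)} with a word of B = {content > c(u)}. The labeling puts omega(u)
   below all labels of A and above all labels of B, so appending u adds a descent, at position
   n - 1, exactly when the shuffle ends in A. For words on separated alphabets the major index
   generating function of their shuffles, with or without such a final letter, is a power of q
   times a Gaussian binomial coefficient; comparing the two closed forms gives the factor q^|A|. *)

section \<open>Gaussian binomial coefficients\<close>

(* qbinom q a b is the Gaussian binomial coefficient [a + b choose a]_q. *)
fun qbinom :: "'a::comm_ring_1 \<Rightarrow> nat \<Rightarrow> nat \<Rightarrow> 'a" where
  "qbinom q 0 b = 1"
| "qbinom q (Suc a) 0 = 1"
| "qbinom q (Suc a) (Suc b) = qbinom q a (Suc b) + q ^ Suc a * qbinom q (Suc a) b"

lemma qbinom_0_right [simp]: "qbinom q a 0 = 1"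
  by (cases a) auto

declare qbinom.simps(3) [simp del]

lemma qbinom_Suc_1: "qbinom q (Suc a) (Suc 0) = q * qbinom q a (Suc 0) + 1"
proof (induction a)
  case (Suc a)
  have "qbinom q (Suc (Suc a)) (Suc 0) = qbinom q (Suc a) (Suc 0) + q ^ Suc (Suc a)"
    by (simp add: qbinom.simps(3))
  also have "\<dots> = q * (qbinom q a (Suc 0) + q ^ Suc a) + 1"
    using Suc.IH by (simp add: algebra_simps)
  also have "\<dots> = q * qbinom q (Suc a) (Suc 0) + 1"
    by (simp add: qbinom.simps(3))
  finally show ?case .
qed (simp add: qbinom.simps(3))

lemma qbinom_Suc_Suc':
  "qbinom q (Suc a) (Suc b) = q ^ Suc b * qbinom q a (Suc b) + qbinom q (Suc a) b"
proof (induction a arbitrary: b)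
  case 0
  show ?case
    by (induction b) (simp_all add: qbinom.simps(3) algebra_simps)
next
  case (Suc a)
  note IH_a = Suc.IH
  show ?case
  proof (induction b)
    case 0
    show ?case
      using qbinom_Suc_1[of q "Suc a"] by simp
  next
    case (Suc b)
    define P Q R where "P = qbinom q a (Suc (Suc b))" and "Q = qbinom q (Suc a) (Suc b)"
      and "R = qbinom q (Suc (Suc a)) b"
    have D1: "qbinom q (Suc a) (Suc (Suc b)) = P + q ^ Suc a * Q"
      and D2: "qbinom q (Suc (Suc a)) (Suc b) = Q + q ^ Suc (Suc a) * R"
      by (simp_all add: P_def Q_def R_def qbinom.simps(3))
    have IH1: "P + q ^ Suc a * Q = q ^ Suc (Suc b) * P + Q"
      using IH_a[of "Suc b"] by (simp add: D1 P_def Q_def)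
    have IH2: "Q + q ^ Suc (Suc a) * R = q ^ Suc b * Q + R"
      using Suc.IH by (simp add: D2 Q_def R_def)
    have "qbinom q (Suc (Suc a)) (Suc (Suc b)) =
        (P + q ^ Suc a * Q) + q ^ Suc (Suc a) * (Q + q ^ Suc (Suc a) * R)"
      by (simp only: qbinom.simps(3)[of q "Suc a" "Suc b"] D1 D2)
    also have "\<dots> = (q ^ Suc (Suc b) * P + Q) + q ^ Suc (Suc a) * (q ^ Suc b * Q + R)"
      by (simp only: IH1 IH2)
    also have "\<dots> = q ^ Suc (Suc b) * (P + q ^ Suc a * Q) + (Q + q ^ Suc (Suc a) * R)"
      by (simp add: algebra_simps)
    finally show ?case
      by (simp only: D1 D2)
  qed
qed

section \<open>The major index of a word\<close>

lemma maj_Suc: "maj \<sigma> (Suc r) = maj \<sigma> r + (if 1 \<le> r \<and> \<sigma> (Suc r) < \<sigma> r then r else 0)"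
proof -
  have "{i. 1 \<le> i \<and> i < Suc r \<and> \<sigma> (Suc i) < \<sigma> i} =
      {i. 1 \<le> i \<and> i < r \<and> \<sigma> (Suc i) < \<sigma> i} \<union> (if 1 \<le> r \<and> \<sigma> (Suc r) < \<sigma> r then {r} else {})"
    by (auto simp: less_Suc_eq)
  then show ?thesis
    unfolding maj_def by simp
qed

lemma maj_cong: "(\<And>k. 1 \<le> k \<Longrightarrow> k \<le> r \<Longrightarrow> \<sigma> k = \<tau> k) \<Longrightarrow> maj \<sigma> r = maj \<tau> r"
  unfolding maj_def by (rule sum.cong) auto

definition maj_word :: "('b \<Rightarrow> 'c::linorder) \<Rightarrow> 'b list \<Rightarrow> nat" where
  "maj_word \<omega> w = maj (\<lambda>k. \<omega> (w ! (k - 1))) (length w)"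

lemma maj_word_Nil [simp]: "maj_word \<omega> [] = 0"
  by (simp add: maj_word_def maj_def)

lemma maj_word_snoc:
  "maj_word \<omega> (w @ [x]) = maj_word \<omega> w + (if w \<noteq> [] \<and> \<omega> x < \<omega> (last w) then length w else 0)"
proof -
  have "maj (\<lambda>k. \<omega> ((w @ [x]) ! (k - 1))) (length w) = maj_word \<omega> w"
    unfolding maj_word_def by (rule maj_cong) (auto simp: nth_append)
  moreover have "w \<noteq> [] \<Longrightarrow> (w @ [x]) ! (length w - 1) = last w"
    by (simp add: nth_append last_conv_nth)
  ultimately show ?thesis
    by (auto simp: maj_word_def maj_Suc Suc_le_eq)
qed

lemma maj_word_singleton [simp]: "maj_word \<omega> [x] = 0"
  using maj_word_snoc[of \<omega> "[]" x] by simp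

lemma maj_word_snoc_snoc:
  "maj_word \<omega> (w @ [x, z]) = maj_word \<omega> (w @ [x]) + (if \<omega> z < \<omega> x then Suc (length w) else 0)"
  using maj_word_snoc[of \<omega> "w @ [x]" z] by simp

lemma maj_word_snoc_above:
  assumes "\<forall>y\<in>set w. \<omega> y < \<omega> x"
  shows "maj_word \<omega> (w @ [x]) = maj_word \<omega> w"
proof (cases "w = []")
  case False
  then have "\<omega> (last w) < \<omega> x"
    using assms by simp
  then show ?thesis
    by (simp add: maj_word_snoc less_imp_not_less)
qed simp

lemma maj_word_snoc_below:
  assumes "\<forall>y\<in>set w. \<omega> x < \<omega> y"
  shows "maj_word \<omega> (w @ [x]) = maj_word \<omega> w + length w"
proof (cases "w = []")
  case False
  then have "\<omega> x < \<omega> (last w)"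
    using assms by simp
  with False show ?thesis
    by (simp add: maj_word_snoc)
qed simp

section \<open>Shuffles from the right\<close>

lemma snoc_in_shuffles_leftI: "zs \<in> shuffles xs ys \<Longrightarrow> zs @ [z] \<in> shuffles (xs @ [z]) ys"
proof (induction xs ys arbitrary: zs rule: shuffles.induct)
  case (1 ys)
  then show ?case
    by (induction ys arbitrary: zs) (auto intro: Cons_in_shuffles_rightI)
qed (auto intro: Cons_in_shuffles_leftI Cons_in_shuffles_rightI)

lemma snoc_in_shuffles_rightI: "zs \<in> shuffles xs ys \<Longrightarrow> zs @ [z] \<in> shuffles xs (ys @ [z])"
  using snoc_in_shuffles_leftI[of zs ys xs z] by (simp add: shuffles_commutes)

lemma rev_in_shuffles: "zs \<in> shuffles xs ys \<Longrightarrow> rev zs \<in> shuffles (rev xs) (rev ys)"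
proof (induction xs ys arbitrary: zs rule: shuffles.induct)
  case (3 x xs y ys)
  then show ?case
    by (force intro: snoc_in_shuffles_leftI[of _ "rev xs" _ x] snoc_in_shuffles_rightI[of _ _ "rev ys" y])
qed auto

lemma rev_shuffles: "rev ` shuffles xs ys = shuffles (rev xs) (rev ys)"
  using rev_in_shuffles[of _ "rev xs" "rev ys"] by (force intro: rev_in_shuffles rev_swap[THEN iffD1])

lemma shuffles_snoc_snoc:
  "shuffles (xs @ [x]) (ys @ [y]) =
    (\<lambda>zs. zs @ [x]) ` shuffles xs (ys @ [y]) \<union> (\<lambda>zs. zs @ [y]) ` shuffles (xs @ [x]) ys"
proof -
  have "shuffles (xs @ [x]) (ys @ [y]) = rev ` shuffles (x # rev xs) (y # rev ys)"
    by (subst rev_shuffles) simp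
  also have "\<dots> = (\<lambda>zs. zs @ [x]) ` rev ` shuffles (rev xs) (y # rev ys) \<union>
      (\<lambda>zs. zs @ [y]) ` rev ` shuffles (x # rev xs) (rev ys)"
    by (simp add: image_Un image_image)
  finally show ?thesis
    by (simp add: rev_shuffles)
qed

lemma sum_shuffles_snoc_snoc:
  assumes "x \<noteq> y"
  shows "(\<Sum>w\<in>shuffles (xs @ [x]) (ys @ [y]). f w) =
    (\<Sum>w\<in>shuffles xs (ys @ [y]). f (w @ [x])) + (\<Sum>w\<in>shuffles (xs @ [x]) ys. f (w @ [y]))"
  unfolding shuffles_snoc_snoc using assms
  by (subst sum.union_disjoint) (auto simp: sum.reindex inj_on_def)

lemma sorted_wrt_shuffles:
  "w \<in> shuffles xs ys \<Longrightarrow> sorted_wrt P xs \<Longrightarrow> sorted_wrt P ys \<Longrightarrow>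
    \<forall>x\<in>set xs. \<forall>y\<in>set ys. P x y \<and> P y x \<Longrightarrow> sorted_wrt P w"
  by (induction xs ys arbitrary: w rule: shuffles.induct) (auto simp: set_shuffles)

section \<open>The major index over the shuffles of two words\<close>

lemma sum_shuffles_maj_word_snoc_snoc:
  fixes q :: "'a::comm_ring_1" and xs ys :: "'b list"
  assumes "x \<noteq> y"
  defines "n \<equiv> length xs + length ys + 2"
  shows "(\<Sum>w\<in>shuffles (xs @ [x]) (ys @ [y]). q ^ maj_word \<omega> (w @ [z])) =
    q ^ (if \<omega> z < \<omega> x then n else 0) * (\<Sum>w\<in>shuffles xs (ys @ [y]). q ^ maj_word \<omega> (w @ [x])) +
    q ^ (if \<omega> z < \<omega> y then n else 0) * (\<Sum>w\<in>shuffles (xs @ [x]) ys. q ^ maj_word \<omega> (w @ [y]))"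
proof -
  have snoc_snoc: "q ^ maj_word \<omega> (w @ [c, z]) = q ^ (if \<omega> z < \<omega> c then n else 0) * q ^ maj_word \<omega> (w @ [c])"
    if "Suc (length w) = n" for w c
    using that by (simp add: maj_word_snoc_snoc power_add)
  show ?thesis
    using sum_shuffles_snoc_snoc[OF assms(1), of "\<lambda>w. q ^ maj_word \<omega> (w @ [z])" xs ys]
    by (simp add: sum_distrib_left snoc_snoc length_shuffles n_def cong: sum.cong)
qed

lemma qbinom_maj_word_recurrence:
  fixes q :: "'a::comm_ring_1" and xs ys :: "'b list"
  assumes sep: "\<forall>x'\<in>set (xs @ [x]). \<forall>y'\<in>set (ys @ [y]). \<omega> y' < \<omega> x'"
    and z: "(\<forall>y'\<in>set (ys @ [y]). \<omega> y' < \<omega> z) \<or> (\<forall>x'\<in>set (xs @ [x]). \<omega> z < \<omega> x')"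
  defines "n \<equiv> length xs + length ys + 2"
  shows "q ^ (maj_word \<omega> (xs @ [x, z]) + maj_word \<omega> (ys @ [y, z])) * qbinom q (Suc (length xs)) (Suc (length ys)) =
    q ^ (if \<omega> z < \<omega> x then n else 0) *
      (q ^ (maj_word \<omega> (xs @ [x]) + maj_word \<omega> (ys @ [y, x])) * qbinom q (length xs) (Suc (length ys))) +
    q ^ (if \<omega> z < \<omega> y then n else 0) *
      (q ^ (maj_word \<omega> (xs @ [x, y]) + maj_word \<omega> (ys @ [y])) * qbinom q (Suc (length xs)) (length ys))"
proof -
  define a b where "a = length xs" and "b = length ys"
  have x_last: "maj_word \<omega> (ys @ [y, x]) = maj_word \<omega> (ys @ [y])"
    using sep maj_word_snoc_above[of "ys @ [y]" \<omega> x] by auto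
  have y_last: "maj_word \<omega> (xs @ [x, y]) = maj_word \<omega> (xs @ [x]) + Suc a"
    using sep maj_word_snoc_below[of "xs @ [x]" \<omega> y] by (auto simp: a_def)
  have x_z: "maj_word \<omega> (xs @ [x, z]) = maj_word \<omega> (xs @ [x]) + (if \<omega> z < \<omega> x then Suc a else 0)"
    and y_z: "maj_word \<omega> (ys @ [y, z]) = maj_word \<omega> (ys @ [y]) + (if \<omega> z < \<omega> y then Suc b else 0)"
    by (simp_all add: maj_word_snoc_snoc a_def b_def)
  consider "\<omega> z < \<omega> x" "\<omega> z < \<omega> y" | "\<omega> z < \<omega> x" "\<not> \<omega> z < \<omega> y"
    | "\<not> \<omega> z < \<omega> x" "\<not> \<omega> z < \<omega> y"
    using z by (auto dest: less_asym)
  then show ?thesis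
  proof cases
    case 2
    then show ?thesis
      by (simp add: x_last y_last x_z y_z qbinom_Suc_Suc' n_def a_def b_def power_add algebra_simps)
  qed (simp_all add: x_last y_last x_z y_z qbinom.simps(3) n_def a_def b_def power_add algebra_simps)
qed

(* The hypothesis on z makes the descent created by appending z depend only on whether the
   shuffle ends in u or in v. *)
lemma sum_shuffles_maj_word_snoc:
  fixes q :: "'a::comm_ring_1"
  assumes "\<forall>x\<in>set u. \<forall>y\<in>set v. \<omega> y < \<omega> x"
    and "(\<forall>y\<in>set v. \<omega> y < \<omega> z) \<or> (\<forall>x\<in>set u. \<omega> z < \<omega> x)"
  shows "(\<Sum>w\<in>shuffles u v. q ^ maj_word \<omega> (w @ [z])) =
    q ^ (maj_word \<omega> (u @ [z]) + maj_word \<omega> (v @ [z])) * qbinom q (length u) (length v)"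
  using assms
proof (induction "length u + length v" arbitrary: u v z rule: less_induct)
  case less
  consider "u = []" | "v = []" | u0 x v0 y where "u = u0 @ [x]" "v = v0 @ [y]"
    by (metis rev_exhaust)
  then show ?case
  proof cases
    case 3
    have x_above: "\<forall>y\<in>set v. \<omega> y < \<omega> x" and y_below: "\<forall>x\<in>set u. \<omega> y < \<omega> x"
      using less.prems(1) 3 by auto
    then have "x \<noteq> y"
      using 3 by auto
    then have "(\<Sum>w\<in>shuffles u v. q ^ maj_word \<omega> (w @ [z])) =
        q ^ (if \<omega> z < \<omega> x then length u0 + length v0 + 2 else 0) *
          (\<Sum>w\<in>shuffles u0 v. q ^ maj_word \<omega> (w @ [x])) +
        q ^ (if \<omega> z < \<omega> y then length u0 + length v0 + 2 else 0) *
          (\<Sum>w\<in>shuffles u v0. q ^ maj_word \<omega> (w @ [y]))"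
      unfolding 3 by (rule sum_shuffles_maj_word_snoc_snoc)
    also have "\<dots> = q ^ (maj_word \<omega> (u @ [z]) + maj_word \<omega> (v @ [z])) * qbinom q (length u) (length v)"
      using less.hyps[of u0 v x] less.hyps[of u v0 y] less.prems x_above y_below
        qbinom_maj_word_recurrence[of u0 x v0 y \<omega> z q]
      by (simp add: 3)
    finally show ?thesis .
  qed simp_all
qed

lemma sum_shuffles_maj_word:
  fixes q :: "'a::comm_ring_1"
  assumes sep: "\<forall>x\<in>set u. \<forall>y\<in>set v. \<omega> y < \<omega> x"
  shows "(\<Sum>w\<in>shuffles u v. q ^ maj_word \<omega> w) =
    q ^ (maj_word \<omega> u + maj_word \<omega> v) * qbinom q (length u) (length v)"
proof -
  consider "u = []" | "v = []" | u0 x v0 y where "u = u0 @ [x]" "v = v0 @ [y]"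
    by (metis rev_exhaust)
  then show ?thesis
  proof cases
    case 3
    have x_above: "\<forall>y\<in>set v. \<omega> y < \<omega> x" and y_below: "\<forall>x\<in>set u. \<omega> y < \<omega> x"
      using sep 3 by auto
    then have "x \<noteq> y"
      using 3 by auto
    then have "(\<Sum>w\<in>shuffles u v. q ^ maj_word \<omega> w) =
        (\<Sum>w\<in>shuffles u0 v. q ^ maj_word \<omega> (w @ [x])) + (\<Sum>w\<in>shuffles u v0. q ^ maj_word \<omega> (w @ [y]))"
      unfolding 3 by (rule sum_shuffles_snoc_snoc)
    also have "(\<Sum>w\<in>shuffles u0 v. q ^ maj_word \<omega> (w @ [x])) =
        q ^ (maj_word \<omega> u + maj_word \<omega> v) * qbinom q (length u0) (length v)"
      using sum_shuffles_maj_word_snoc[of u0 v \<omega> x q] sep x_above maj_word_snoc_above[OF x_above]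
      by (simp add: 3(1))
    also have "(\<Sum>w\<in>shuffles u v0. q ^ maj_word \<omega> (w @ [y])) =
        q ^ (maj_word \<omega> u + maj_word \<omega> v + length u) * qbinom q (length u) (length v0)"
      using sum_shuffles_maj_word_snoc[of u v0 \<omega> y q] sep y_below maj_word_snoc_below[OF y_below]
      by (simp add: 3(2) ac_simps)
    also have "q ^ (maj_word \<omega> u + maj_word \<omega> v) * qbinom q (length u0) (length v) +
        q ^ (maj_word \<omega> u + maj_word \<omega> v + length u) * qbinom q (length u) (length v0) =
        q ^ (maj_word \<omega> u + maj_word \<omega> v) * qbinom q (length u) (length v)"
      using qbinom.simps(3)[of q "length u0" "length v0"] by (simp add: 3 power_add algebra_simps)
    finally show ?thesis .
  qed simp_all
qed

lemma sum_shuffles_maj_word_snoc_between: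
  fixes q :: "'a::comm_ring_1"
  assumes "\<forall>x\<in>set u. \<omega> z < \<omega> x" and "\<forall>y\<in>set v. \<omega> y < \<omega> z"
  shows "(\<Sum>w\<in>shuffles u v. q ^ maj_word \<omega> (w @ [z])) = q ^ length u * (\<Sum>w\<in>shuffles u v. q ^ maj_word \<omega> w)"
proof -
  have "\<forall>x\<in>set u. \<forall>y\<in>set v. \<omega> y < \<omega> x"
    using assms by (meson less_trans)
  with assms show ?thesis
    by (simp add: sum_shuffles_maj_word_snoc sum_shuffles_maj_word maj_word_snoc_above
        maj_word_snoc_below power_add)
qed

section \<open>Linear extensions as words\<close>

(* The words g^-1(1) ... g^-1(r) of the linear extensions g: no letter is below an earlier one. *)
definition lin_ext_words :: "('b \<Rightarrow> 'b \<Rightarrow> bool) \<Rightarrow> 'b set \<Rightarrow> 'b list set" where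
  "lin_ext_words le R = {w \<in> permutations_of_set R. sorted_wrt (\<lambda>x y. \<not> le y x) w}"

lemma finite_lin_ext_words [simp]: "finite (lin_ext_words le R)"
  unfolding lin_ext_words_def by simp

definition word_of_labeling :: "'b set \<Rightarrow> ('b \<Rightarrow> nat) \<Rightarrow> 'b list" where
  "word_of_labeling R g = map (\<lambda>k. inv_into R g (Suc k)) [0..<card R]"

definition labeling_of_word :: "'b list \<Rightarrow> 'b \<Rightarrow> nat" where
  "labeling_of_word w x = (if x \<in> set w then Suc (inv_into {..<length w} ((!) w) x) else 0)"

lemma length_word_of_labeling [simp]: "length (word_of_labeling R g) = card R"
  by (simp add: word_of_labeling_def)

lemma nth_word_of_labeling: "k < card R \<Longrightarrow> word_of_labeling R g ! k = inv_into R g (Suc k)"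
  by (simp add: word_of_labeling_def)

lemma word_of_labeling_in_lin_ext_words:
  assumes "g \<in> lin_exts le R"
  shows "word_of_labeling R g \<in> lin_ext_words le R"
proof -
  let ?n = "card R" and ?w = "word_of_labeling R g"
  have g: "bij_betw g R {1..?n}" and mono: "\<And>x y. x \<in> R \<Longrightarrow> y \<in> R \<Longrightarrow> le x y \<Longrightarrow> g x \<le> g y"
    using assms unfolding lin_exts_def by auto
  have g_nth: "g (?w ! k) = Suc k" if "k < ?n" for k
    using that g by (simp add: nth_word_of_labeling bij_betw_def f_inv_into_f)
  have "distinct ?w"
    unfolding distinct_conv_nth by (metis g_nth length_word_of_labeling nat.inject)
  moreover have "set ?w = R"
  proof -
    have "set ?w = inv_into R g ` Suc ` {..<?n}"
      by (auto simp: word_of_labeling_def image_image)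
    then show ?thesis
      using bij_betw_inv_into[OF g] by (simp add: bij_betw_def image_Suc_lessThan)
  qed
  moreover have "sorted_wrt (\<lambda>x y. \<not> le y x) ?w"
    unfolding sorted_wrt_iff_nth_less length_word_of_labeling
  proof (intro allI impI notI)
    fix i j assume "i < j" "j < ?n" and "le (?w ! j) (?w ! i)"
    moreover have "?w ! i \<in> R" "?w ! j \<in> R"
      using \<open>set ?w = R\<close> \<open>i < j\<close> \<open>j < ?n\<close> by (metis length_word_of_labeling less_trans nth_mem)+
    ultimately show False
      using mono[of "?w ! j" "?w ! i"] g_nth by simp
  qed
  ultimately show ?thesis
    by (simp add: lin_ext_words_def permutations_of_set_def)
qed

lemma labeling_of_word_of_labeling:
  assumes "g \<in> lin_exts le R"
  shows "labeling_of_word (word_of_labeling R g) = g"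
proof
  fix x
  let ?n = "card R" and ?w = "word_of_labeling R g"
  have g: "bij_betw g R {1..?n}" and zero: "x \<notin> R \<Longrightarrow> g x = 0"
    using assms unfolding lin_exts_def by auto
  have w: "distinct ?w" "set ?w = R"
    using word_of_labeling_in_lin_ext_words[OF assms]
    by (auto simp: lin_ext_words_def permutations_of_set_def)
  show "labeling_of_word ?w x = g x"
  proof (cases "x \<in> R")
    case True
    then have "g x \<in> {1..?n}"
      using bij_betwE[OF g] by blast
    then have k: "g x - 1 < ?n" "Suc (g x - 1) = g x"
      by auto
    then have "?w ! (g x - 1) = x"
      using True g by (metis nth_word_of_labeling bij_betw_def inv_into_f_f)
    then have "inv_into {..<length ?w} ((!) ?w) x = g x - 1"
      using w(1) k by (intro inv_into_f_eq) (auto simp: distinct_conv_nth inj_on_def)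
    then show ?thesis
      using True k w(2) by (simp add: labeling_of_word_def)
  qed (use w zero in \<open>simp add: labeling_of_word_def\<close>)
qed

lemma labeling_of_word_nth: "distinct w \<Longrightarrow> k < length w \<Longrightarrow> labeling_of_word w (w ! k) = Suc k"
  using bij_betw_nth[of w "{..<length w}" "set w"]
  by (simp add: labeling_of_word_def bij_betw_def)

lemma bij_betw_labeling_of_word:
  assumes "distinct w"
  shows "bij_betw (labeling_of_word w) (set w) {1..length w}"
proof -
  have "bij_betw ((!) w) {..<length w} (set w)"
    using assms by (intro bij_betw_nth) auto
  then have "bij_betw (Suc \<circ> inv_into {..<length w} ((!) w)) (set w) {1..length w}"
    by (intro bij_betw_trans[OF bij_betw_inv_into]) (simp_all add: bij_betw_def image_Suc_lessThan)
  then show ?thesis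
    by (rule bij_betw_cong[THEN iffD1, rotated]) (simp add: labeling_of_word_def)
qed

lemma labeling_of_word_in_lin_exts:
  assumes "w \<in> lin_ext_words le R"
  shows "labeling_of_word w \<in> lin_exts le R"
proof -
  have w: "distinct w" "set w = R" and sorted: "sorted_wrt (\<lambda>x y. \<not> le y x) w"
    using assms by (auto simp: lin_ext_words_def permutations_of_set_def)
  have "labeling_of_word w x \<le> labeling_of_word w y" if "x \<in> R" "y \<in> R" "le x y" for x y
  proof -
    obtain i j where "i < length w" "j < length w" "x = w ! i" "y = w ! j"
      using \<open>x \<in> R\<close> \<open>y \<in> R\<close> w(2) by (metis in_set_conv_nth)
    moreover have "\<not> j < i"
      using sorted \<open>le x y\<close> calculation unfolding sorted_wrt_iff_nth_less by blast
    ultimately show ?thesis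
      by (simp add: labeling_of_word_nth w(1))
  qed
  moreover have "card R = length w"
    using w distinct_card by metis
  ultimately show ?thesis
    using bij_betw_labeling_of_word[OF w(1)] w(2) by (auto simp: lin_exts_def labeling_of_word_def)
qed

lemma word_of_labeling_of_word:
  assumes "w \<in> lin_ext_words le R"
  shows "word_of_labeling R (labeling_of_word w) = w"
proof -
  have w: "distinct w" "set w = R"
    using assms by (auto simp: lin_ext_words_def permutations_of_set_def)
  then have card: "card R = length w"
    using distinct_card by metis
  show ?thesis
  proof (rule nth_equalityI)
    fix k assume "k < length (word_of_labeling R (labeling_of_word w))"
    then have "k < length w"
      by (simp add: card)
    then have "inv_into R (labeling_of_word w) (Suc k) = w ! k"
      using bij_betw_labeling_of_word[OF w(1)] w
      by (intro inv_into_f_eq) (auto simp: bij_betw_def labeling_of_word_nth)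
    with \<open>k < length w\<close> show "word_of_labeling R (labeling_of_word w) ! k = w ! k"
      by (simp add: nth_word_of_labeling card)
  qed (simp add: card)
qed

lemma maj_word_word_of_labeling:
  "maj_word \<omega> (word_of_labeling R g) = maj (\<lambda>k. \<omega> (inv_into R g k)) (card R)"
  unfolding maj_word_def length_word_of_labeling
  by (rule maj_cong) (simp add: nth_word_of_labeling)

lemma emaj_eq_sum_lin_ext_words:
  "emaj le R \<omega> q = (\<Sum>w\<in>lin_ext_words le R. q ^ maj_word \<omega> w)"
  unfolding emaj_def
  by (rule sum.reindex_bij_witness[of _ labeling_of_word "word_of_labeling R"])
    (simp_all add: word_of_labeling_in_lin_ext_words labeling_of_word_of_labeling
      labeling_of_word_in_lin_exts word_of_labeling_of_word maj_word_word_of_labeling)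

definition maximal_elements :: "('b \<Rightarrow> 'b \<Rightarrow> bool) \<Rightarrow> 'b set \<Rightarrow> 'b set" where
  "maximal_elements le R = {x \<in> R. \<forall>y\<in>R. le x y \<longrightarrow> y = x}"

lemma snoc_in_lin_ext_words_iff:
  "w @ [x] \<in> lin_ext_words le R \<longleftrightarrow> x \<in> maximal_elements le R \<and> w \<in> lin_ext_words le (R - {x})"
  by (auto simp: lin_ext_words_def permutations_of_set_def sorted_wrt_append maximal_elements_def)

lemma sum_lin_ext_words_by_last:
  assumes "finite R" and "R \<noteq> {}"
  shows "(\<Sum>w\<in>lin_ext_words le R. f w) =
    (\<Sum>x\<in>maximal_elements le R. \<Sum>w\<in>lin_ext_words le (R - {x}). f (w @ [x]))"
proof -
  have snoc: "w = butlast w @ [last w]" if "w \<in> lin_ext_words le R" for w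
  proof -
    have "w \<noteq> []"
      using that assms(2) by (auto simp: lin_ext_words_def permutations_of_set_def)
    then show ?thesis
      by simp
  qed
  have "last w \<in> maximal_elements le R" if "w \<in> lin_ext_words le R" for w
    using snoc_in_lin_ext_words_iff[of "butlast w" "last w" le R] snoc[OF that] that by simp
  then have "(\<Sum>w\<in>lin_ext_words le R. f w) =
      (\<Sum>x\<in>maximal_elements le R. \<Sum>w\<in>{w \<in> lin_ext_words le R. last w = x}. f w)"
    using assms(1) by (intro sum.group[symmetric]) (auto simp: maximal_elements_def)
  also have "\<dots> = (\<Sum>x\<in>maximal_elements le R. \<Sum>w\<in>lin_ext_words le (R - {x}). f (w @ [x]))"
  proof (rule sum.cong[OF refl])
    fix x assume x: "x \<in> maximal_elements le R"
    have "{w \<in> lin_ext_words le R. last w = x} = (\<lambda>w. w @ [x]) ` lin_ext_words le (R - {x})"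
    proof (intro set_eqI iffI)
      fix w assume "w \<in> {w \<in> lin_ext_words le R. last w = x}"
      then show "w \<in> (\<lambda>w. w @ [x]) ` lin_ext_words le (R - {x})"
        using snoc snoc_in_lin_ext_words_iff[of "butlast w" x le R] by (metis (mono_tags) image_eqI mem_Collect_eq)
    qed (use x in \<open>auto simp: snoc_in_lin_ext_words_iff\<close>)
    then show "(\<Sum>w\<in>{w \<in> lin_ext_words le R. last w = x}. f w) = (\<Sum>w\<in>lin_ext_words le (R - {x}). f (w @ [x]))"
      by (simp add: sum.reindex inj_on_def)
  qed
  finally show ?thesis .
qed

lemma sum_lin_ext_words_Un:
  assumes disj: "R1 \<inter> R2 = {}" and incomp: "\<forall>x\<in>R1. \<forall>y\<in>R2. \<not> le x y \<and> \<not> le y x"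
  shows "(\<Sum>w\<in>lin_ext_words le (R1 \<union> R2). f w) =
    (\<Sum>(u, v)\<in>lin_ext_words le R1 \<times> lin_ext_words le R2. \<Sum>w\<in>shuffles u v. f w)"
proof -
  let ?P = "\<lambda>z. z \<in> R1"
  have "partition ?P w \<in> lin_ext_words le R1 \<times> lin_ext_words le R2"
    if "w \<in> lin_ext_words le (R1 \<union> R2)" for w
    using that disj by (auto simp: lin_ext_words_def permutations_of_set_def sorted_wrt_filter)
  then have "(\<Sum>w\<in>lin_ext_words le (R1 \<union> R2). f w) =
      (\<Sum>p\<in>lin_ext_words le R1 \<times> lin_ext_words le R2.
        \<Sum>w\<in>{w \<in> lin_ext_words le (R1 \<union> R2). partition ?P w = p}. f w)"
    by (intro sum.group[symmetric]) auto
  also have "\<dots> = (\<Sum>(u, v)\<in>lin_ext_words le R1 \<times> lin_ext_words le R2. \<Sum>w\<in>shuffles u v. f w)"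
  proof (rule sum.cong[OF refl], clarify)
    fix u v assume u: "u \<in> lin_ext_words le R1" and v: "v \<in> lin_ext_words le R2"
    then have "partition ?P -` {(u, v)} = shuffles u v"
      using disj by (intro inv_image_partition) (auto simp: lin_ext_words_def permutations_of_set_def)
    moreover have "shuffles u v \<subseteq> lin_ext_words le (R1 \<union> R2)"
    proof
      fix w assume w: "w \<in> shuffles u v"
      have "sorted_wrt (\<lambda>x y. \<not> le y x) w"
        using u v incomp by (intro sorted_wrt_shuffles[OF w]) (auto simp: lin_ext_words_def permutations_of_set_def)
      then show "w \<in> lin_ext_words le (R1 \<union> R2)"
        using u v disj w
        by (auto simp: lin_ext_words_def permutations_of_set_def set_shuffles intro: distinct_disjoint_shuffles)
    qed
    ultimately have "{w \<in> lin_ext_words le (R1 \<union> R2). partition ?P w = (u, v)} = shuffles u v"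
      by blast
    then show "(\<Sum>w\<in>{w \<in> lin_ext_words le (R1 \<union> R2). partition ?P w = (u, v)}. f w) =
        (\<Sum>w\<in>shuffles u v. f w)"
      by simp
  qed
  finally show ?thesis .
qed

section \<open>Partitions and skew shapes\<close>

lemma partition_nth_antimono:
  "is_partition lam \<Longrightarrow> a \<le> b \<Longrightarrow> b < length lam \<Longrightarrow> lam ! b \<le> lam ! a"
  unfolding is_partition_def sorted_wrt_iff_nth_less by (cases "a = b") auto

lemma diagram_down_closed:
  assumes "is_partition lam" "(i, j) \<in> diagram lam" "1 \<le> i'" "i' \<le> i" "1 \<le> j'" "j' \<le> j"
  shows "(i', j') \<in> diagram lam"
proof -
  have "lam ! (i - 1) \<le> lam ! (i' - 1)"
    using assms by (intro partition_nth_antimono) (auto simp: diagram_def)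
  then show ?thesis
    using assms by (auto simp: diagram_def)
qed

lemma finite_skew: "finite (skew lam mu)"
proof -
  have "diagram lam = (SIGMA i:{1..length lam}. {1..lam ! (i - 1)})"
    by (auto simp: diagram_def)
  then show ?thesis
    by (simp add: skew_def)
qed

lemma is_partition_list_update:
  assumes mu: "is_partition mu" and k: "k < length mu" "mu ! k \<le> m"
    and above: "0 < k \<Longrightarrow> m \<le> mu ! (k - 1)"
  shows "is_partition (mu[k := m])"
proof -
  have "mu[k := m] ! r \<le> mu[k := m] ! p" if "p < r" "r < length mu" for p r
  proof (cases "r = k")
    case True
    then have "m \<le> mu ! (k - 1)" "mu ! (k - 1) \<le> mu ! p"
      using that above k partition_nth_antimono[OF mu, of p "k - 1"] by auto
    then show ?thesis
      using True that by simp
  next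
    case False
    have "mu ! r \<le> mu ! p" "p = k \<Longrightarrow> mu ! r \<le> m"
      using that k partition_nth_antimono[OF mu, of p r] by auto
    then show ?thesis
      using False k by (cases "p = k") auto
  qed
  moreover have "0 < m"
  proof -
    have "0 < mu ! k"
      using mu nth_mem[OF k(1)] unfolding is_partition_def by blast
    with k(2) show ?thesis
      by simp
  qed
  ultimately show ?thesis
    using mu set_update_subset_insert[of mu k m]
    by (auto simp: is_partition_def sorted_wrt_iff_nth_less)
qed

lemma diagram_list_update_Suc:
  "k < length mu \<Longrightarrow> diagram (mu[k := Suc (mu ! k)]) = insert (Suc k, Suc (mu ! k)) (diagram mu)"
  by (auto simp: diagram_def nth_list_update split: if_splits)

lemma diagram_snoc_1: "diagram (mu @ [1]) = insert (Suc (length mu), 1) (diagram mu)"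
  by (auto simp: diagram_def nth_append split: if_splits)

lemma diagram_insert_addable:
  assumes mu: "is_partition mu" and ij: "1 \<le> i" "1 \<le> j" "(i, j) \<notin> diagram mu"
    and above: "2 \<le> i \<Longrightarrow> (i - 1, j) \<in> diagram mu" and left: "2 \<le> j \<Longrightarrow> (i, j - 1) \<in> diagram mu"
  shows "\<exists>nu. is_partition nu \<and> diagram nu = diagram mu \<union> {(i, j)}"
proof (cases "2 \<le> j")
  case True
  then have i: "i - 1 < length mu" and row: "mu ! (i - 1) = j - 1"
    using left ij by (auto simp: diagram_def)
  have "is_partition (mu[i - 1 := j])"
    using above ij i row by (intro is_partition_list_update[OF mu]) (auto simp: diagram_def)
  moreover have "diagram (mu[i - 1 := j]) = diagram mu \<union> {(i, j)}"
    using diagram_list_update_Suc[OF i] row ij True by simp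
  ultimately show ?thesis
    by blast
next
  case False
  then have "j = 1"
    using ij by simp
  moreover have "length mu < i"
  proof (rule ccontr)
    assume "\<not> length mu < i"
    then have "0 < mu ! (i - 1)"
      using mu ij by (auto simp: is_partition_def)
    then show False
      using ij \<open>j = 1\<close> \<open>\<not> length mu < i\<close> by (auto simp: diagram_def)
  qed
  moreover have "i \<le> Suc (length mu)"
    using above by (cases "2 \<le> i") (auto simp: diagram_def)
  ultimately have "i = Suc (length mu)" "j = 1"
    by auto
  then have "diagram (mu @ [1]) = diagram mu \<union> {(i, j)}"
    using diagram_snoc_1[of mu] by simp
  moreover have "is_partition (mu @ [1])"
    using mu by (auto simp: is_partition_def sorted_wrt_append)
  ultimately show ?thesis
    by blast
qed

locale skew_shape =
  fixes lam mu :: "nat list"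
  assumes partition_lam: "is_partition lam" and partition_mu: "is_partition mu"
begin

lemma skew_convex:
  assumes "(i1, j1) \<in> skew lam mu" "(i2, j2) \<in> skew lam mu" "i1 \<le> i" "i \<le> i2" "j1 \<le> j" "j \<le> j2"
  shows "(i, j) \<in> skew lam mu"
proof -
  have "1 \<le> i1" "1 \<le> j1"
    using assms(1) by (auto simp: skew_def diagram_def)
  then show ?thesis
    using assms diagram_down_closed[OF partition_lam, of i2 j2 i j]
      diagram_down_closed[OF partition_mu, of i j i1 j1]
    by (auto simp: skew_def)
qed

lemma inner_corners_eq_maximal_elements: "inner_corners lam mu = maximal_elements Qle (skew lam mu)"
proof (intro set_eqI iffI)
  fix u assume "u \<in> inner_corners lam mu"
  then obtain nu where u: "u \<in> skew lam mu" and nu: "is_partition nu" "diagram nu = diagram mu \<union> {u}"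
    unfolding inner_corners_def by blast
  have "y = u" if "y \<in> skew lam mu" "Qle u y" for y
  proof -
    have "u \<in> diagram nu"
      by (simp add: nu(2))
    moreover have "1 \<le> fst y" "1 \<le> snd y"
      using that(1) by (auto simp: skew_def diagram_def)
    ultimately have "y \<in> diagram nu"
      using diagram_down_closed[OF nu(1), of "fst u" "snd u" "fst y" "snd y"] \<open>Qle u y\<close>
      by (simp add: Qle_def)
    then show "y = u"
      using nu that by (auto simp: skew_def)
  qed
  with u show "u \<in> maximal_elements Qle (skew lam mu)"
    by (simp add: maximal_elements_def)
next
  fix u assume "u \<in> maximal_elements Qle (skew lam mu)"
  then have u: "u \<in> skew lam mu" and max: "\<And>y. y \<in> skew lam mu \<Longrightarrow> Qle u y \<Longrightarrow> y = u"
    by (auto simp: maximal_elements_def)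
  obtain i j where ij: "u = (i, j)"
    by (cases u)
  have pos: "1 \<le> i" "1 \<le> j" and lam: "(i, j) \<in> diagram lam" and not_mu: "(i, j) \<notin> diagram mu"
    using u ij by (auto simp: skew_def diagram_def)
  have "(i', j') \<in> diagram mu" if "1 \<le> i'" "i' \<le> i" "1 \<le> j'" "j' \<le> j" "(i', j') \<noteq> (i, j)" for i' j'
    using max[of "(i', j')"] diagram_down_closed[OF partition_lam lam] that ij
    by (auto simp: skew_def Qle_def)
  then have "\<exists>nu. is_partition nu \<and> diagram nu = diagram mu \<union> {(i, j)}"
    using pos not_mu by (intro diagram_insert_addable[OF partition_mu]) auto
  then show "u \<in> inner_corners lam mu"
    using u ij by (simp add: inner_corners_def)
qed

end

locale broken_border_strip = skew_shape +
  assumes no_2x2: "no_2x2 (skew lam mu)"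
begin

lemma not_strictly_southeast:
  assumes "(i1, j1) \<in> skew lam mu" "(i2, j2) \<in> skew lam mu" "i1 < i2"
  shows "\<not> j1 < j2"
proof
  assume "j1 < j2"
  then have "(i1, j1) \<in> skew lam mu" "(Suc i1, j1) \<in> skew lam mu"
    "(i1, Suc j1) \<in> skew lam mu" "(Suc i1, Suc j1) \<in> skew lam mu"
    using skew_convex[OF assms(1,2)] assms(3) by auto
  then show False
    using no_2x2 unfolding no_2x2_def by blast
qed

lemma inj_on_content: "inj_on content (skew lam mu)"
proof (rule inj_onI)
  fix a b assume ab: "a \<in> skew lam mu" "b \<in> skew lam mu" "content a = content b"
  obtain i1 j1 i2 j2 where "a = (i1, j1)" "b = (i2, j2)"
    by (cases a, cases b)
  with ab have cells: "(i1, j1) \<in> skew lam mu" "(i2, j2) \<in> skew lam mu"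
    and eq: "int j1 - int i1 = int j2 - int i2"
    by (auto simp: content_def)
  have "i1 < i2 \<Longrightarrow> j1 < j2" "i2 < i1 \<Longrightarrow> j2 < j1"
    using eq by linarith+
  then have "i1 = i2"
    using not_strictly_southeast[OF cells] not_strictly_southeast[OF cells(2,1)] by linarith
  with eq \<open>a = (i1, j1)\<close> \<open>b = (i2, j2)\<close> show "a = b"
    by simp
qed

lemma no_maximal_cell_inside_column:
  assumes x: "x \<in> maximal_elements Qle (skew lam mu)"
    and cells: "(i2, j) \<in> skew lam mu" "(i1, j) \<in> skew lam mu"
    and between: "content (i1, j) < content x" "content x < content (i2, j)"
  shows False
proof -
  obtain r c where rc: "x = (r, c)"
    by (cases x)
  define r' where "r' = nat (int j - (int c - int r))"
  have r': "int r' = int j - (int c - int r)" "i2 < r'" "r' < i1"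
    using between rc unfolding r'_def content_def by auto
  then have cell: "(r', j) \<in> skew lam mu" and neighbour: "(r' - 1, j) \<in> skew lam mu"
    using skew_convex[OF cells] by auto
  have "content (r', j) = content x"
    using r' rc by (simp add: content_def)
  then have "(r', j) = x"
    using inj_onD[OF inj_on_content _ cell] x by (simp add: maximal_elements_def)
  then have "Qle x (r' - 1, j)" and "(r' - 1, j) \<noteq> x"
    using r'(2) by (auto simp: Qle_def)
  then show False
    using x neighbour by (auto simp: maximal_elements_def)
qed

lemma no_maximal_cell_inside_row:
  assumes x: "x \<in> maximal_elements Qle (skew lam mu)"
    and cells: "(i, j1) \<in> skew lam mu" "(i, j2) \<in> skew lam mu"
    and between: "content (i, j1) < content x" "content x < content (i, j2)"
  shows False
proof -
  obtain r c where rc: "x = (r, c)"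
    by (cases x)
  define c' where "c' = nat (int i + (int c - int r))"
  have c': "int c' = int i + (int c - int r)" "j1 < c'" "c' < j2"
    using between rc unfolding c'_def content_def by auto
  then have cell: "(i, c') \<in> skew lam mu" and neighbour: "(i, c' - 1) \<in> skew lam mu"
    using skew_convex[OF cells] by auto
  have "content (i, c') = content x"
    using c' rc by (simp add: content_def)
  then have "(i, c') = x"
    using inj_onD[OF inj_on_content _ cell] x by (simp add: maximal_elements_def)
  then have "Qle x (i, c' - 1)" and "(i, c' - 1) \<noteq> x"
    using c'(2) by (auto simp: Qle_def)
  then show False
    using x neighbour by (auto simp: maximal_elements_def)
qed

lemma maximal_cell_separates:
  assumes x: "x \<in> maximal_elements Qle (skew lam mu)"
    and a: "a \<in> skew lam mu" and b: "b \<in> skew lam mu"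
    and between: "content a < content x" "content x < content b"
  shows "\<not> Qle a b \<and> \<not> Qle b a"
proof -
  obtain i1 j1 i2 j2 where cells: "a = (i1, j1)" "b = (i2, j2)"
    by (cases a, cases b)
  have "int j1 - int i1 < int j2 - int i2"
    using between cells by (auto simp: content_def)
  have "\<not> Qle a b"
  proof
    assume "Qle a b"
    then have "i2 < i1" "j2 \<le> j1"
      using cells \<open>int j1 - int i1 < _\<close> by (auto simp: Qle_def)
    then have "j2 = j1"
      using not_strictly_southeast[of i2 j2 i1 j1] a b cells by (cases "j2 < j1") auto
    then show False
      using no_maximal_cell_inside_column[OF x, of i2 j1 i1] a b between cells by simp
  qed
  moreover have "\<not> Qle b a"
  proof
    assume "Qle b a"
    then have "i1 \<le> i2" "j1 < j2"
      using cells \<open>int j1 - int i1 < _\<close> by (auto simp: Qle_def)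
    then have "i1 = i2"
      using not_strictly_southeast[of i1 j1 i2 j2] a b cells by (cases "i1 < i2") auto
    then show False
      using no_maximal_cell_inside_row[OF x, of i1 j1 j2] a b between cells by simp
  qed
  ultimately show ?thesis ..
qed

lemma sum_lin_ext_words_snoc_inner_corner:
  fixes q :: "'a::comm_ring_1"
  assumes x: "x \<in> inner_corners lam mu"
    and \<omega>: "\<forall>u\<in>skew lam mu. \<forall>v\<in>skew lam mu. content u < content v \<longrightarrow> \<omega> v < \<omega> u"
  shows "(\<Sum>w\<in>lin_ext_words Qle (skew lam mu - {x}). q ^ maj_word \<omega> (w @ [x])) =
    q ^ card {v \<in> skew lam mu. content v < content x} * emaj Qle (skew lam mu - {x}) \<omega> q"
proof -
  define R1 R2 where "R1 = {v \<in> skew lam mu. content v < content x}"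
    and "R2 = {v \<in> skew lam mu. content x < content v}"
  have x_max: "x \<in> maximal_elements Qle (skew lam mu)"
    using x by (simp add: inner_corners_eq_maximal_elements)
  then have "content v \<noteq> content x" if "v \<in> skew lam mu - {x}" for v
    using that inj_onD[OF inj_on_content] by (fastforce simp: maximal_elements_def)
  then have split: "skew lam mu - {x} = R1 \<union> R2"
    using x_max by (auto simp: R1_def R2_def linorder_neq_iff maximal_elements_def)
  have disj: "R1 \<inter> R2 = {}"
    by (auto simp: R1_def R2_def)
  have incomp: "\<forall>a\<in>R1. \<forall>b\<in>R2. \<not> Qle a b \<and> \<not> Qle b a"
    using maximal_cell_separates[OF x_max] by (auto simp: R1_def R2_def)
  have len: "length u = card R1" if "u \<in> lin_ext_words Qle R1" for u
    using that finite_skew[of lam mu]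
    by (auto simp: lin_ext_words_def R1_def intro: length_finite_permutations_of_set)
  have between: "\<forall>a\<in>set u. \<omega> x < \<omega> a" "\<forall>b\<in>set v. \<omega> b < \<omega> x"
    if "u \<in> lin_ext_words Qle R1" "v \<in> lin_ext_words Qle R2" for u v
    using that \<omega> x_max by (auto simp: lin_ext_words_def permutations_of_set_def R1_def R2_def
        maximal_elements_def)
  have "(\<Sum>w\<in>lin_ext_words Qle (R1 \<union> R2). q ^ maj_word \<omega> (w @ [x])) =
      (\<Sum>(u, v)\<in>lin_ext_words Qle R1 \<times> lin_ext_words Qle R2. \<Sum>w\<in>shuffles u v. q ^ maj_word \<omega> (w @ [x]))"
    by (rule sum_lin_ext_words_Un[OF disj incomp])
  also have "\<dots> = (\<Sum>(u, v)\<in>lin_ext_words Qle R1 \<times> lin_ext_words Qle R2.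
      q ^ card R1 * (\<Sum>w\<in>shuffles u v. q ^ maj_word \<omega> w))"
    by (intro sum.cong refl) (auto simp: sum_shuffles_maj_word_snoc_between between len)
  also have "\<dots> = q ^ card R1 * (\<Sum>w\<in>lin_ext_words Qle (R1 \<union> R2). q ^ maj_word \<omega> w)"
    by (simp add: sum_lin_ext_words_Un[OF disj incomp] sum_distrib_left case_prod_unfold)
  finally show ?thesis
    by (simp add: split emaj_eq_sum_lin_ext_words R1_def)
qed

end

theorem corollary7p1:
  fixes lam mu :: "nat list" and \<omega> :: "nat \<times> nat \<Rightarrow> nat" and q :: "'a::comm_ring_1"
  assumes "border_strip lam mu"
    and "reversed_schur_labeling lam mu \<omega>"
  shows "emaj Qle (skew lam mu) \<omega> q =
    (\<Sum>u\<in>inner_corners lam mu.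
        q ^ card {v \<in> skew lam mu. content v < content u} * emaj Qle (skew lam mu - {u}) \<omega> q)"
proof -
  interpret broken_border_strip lam mu
    using assms(1) by unfold_locales (auto simp: border_strip_def)
  have nonempty: "skew lam mu \<noteq> {}"
    using assms(1) by (simp add: border_strip_def edge_connected_def)
  have \<omega>: "\<forall>u\<in>skew lam mu. \<forall>v\<in>skew lam mu. content u < content v \<longrightarrow> \<omega> v < \<omega> u"
    using assms(2) by (simp add: reversed_schur_labeling_def)
  have "emaj Qle (skew lam mu) \<omega> q = (\<Sum>w\<in>lin_ext_words Qle (skew lam mu). q ^ maj_word \<omega> w)"
    by (rule emaj_eq_sum_lin_ext_words)
  also have "\<dots> = (\<Sum>u\<in>inner_corners lam mu.
      \<Sum>w\<in>lin_ext_words Qle (skew lam mu - {u}). q ^ maj_word \<omega> (w @ [u]))"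
    by (simp add: sum_lin_ext_words_by_last[OF finite_skew nonempty] inner_corners_eq_maximal_elements)
  also have "\<dots> = (\<Sum>u\<in>inner_corners lam mu.
      q ^ card {v \<in> skew lam mu. content v < content u} * emaj Qle (skew lam mu - {u}) \<omega> q)"
    by (intro sum.cong refl sum_lin_ext_words_snoc_inner_corner \<omega>)
  finally show ?thesis .
qed

end
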